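(* Let $a,b\in[0,T]$, let $F=F_{a\to b}$ and let $x^*$ be a fixed point of $F$, with all objects and constants ($f^u_{a\to b},f^c_{a\to b},\Gamma_{a,b}(L),C,r,B$) as in the context, and assume the Smooth ODE and Contraction/Fixed-Point assumptions of the context hold. Let $x\in\mathbb{R}^d$ with $\|x\|\le B$ and $\|x^*\|\le B$. Then for every integer $k\ge 0$, $$\|f^c_{a\to b}(F^{k}(x))-f^u_{a\to b}(F^{k}(x))\|\le 2C\,\Gamma_{a,b}(L)\,r^k\|x-x^*\|\le 4C\,\Gamma_{a,b}(L)\,r^kB,$$ where $F^k$ is the $k$-fold composition of $F$.
   Context: $\|\cdot\|$ is the Euclidean norm on $\mathbb{R}^d$, $T>0$. Let $\bar{\alpha}:[0,T]\to(0,1)$ be a smooth, strictly decreasing noise schedule, and set $\lambda_{t}:=\sqrt{\bar{\alpha}_t}\,\frac{d}{dt}\big(\sqrt{(1-\bar{\alpha}_t)/\bar{\alpha}_t}\big)$, $\mu_{t}:=-\sqrt{\bar{\alpha}_t}\,\frac{d}{dt}\big(1/\sqrt{\bar{\alpha}_t}\big)$. Let $\varepsilon^u,\varepsilon^c:\mathbb{R}^d\times[0,T]\to\mathbb{R}^d$ be noise predictors and $f^u_{a\to b}(x)$ (resp. $f^c_{a\to b}(x)$) the value at time $b$ of the solution of $\frac{dx_t}{dt}=\mu_t x_t+\lambda_t\varepsilon^u(x_t,t)$ (resp. with $\varepsilon^c$) with $x_a=x$. $L>0$ is a Lipschitz constant of $\varepsilon^u(\cdot,t),\varepsilon^c(\cdot,t)$,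 $\Gamma_{a,b}(L):=(|\lambda_a|L+|\mu_a|)|b-a|+1$, and $B>0$. (Smooth ODE) There is $C>1$ with $\|f^{u}_{a\to b}(x)-f^{u}_{a\to b}(y)\|\le C\Gamma_{a,b}(L)\|x-y\|$ and $\|f^{c}_{a\to b}(x)-f^{c}_{a\to b}(y)\|\le C\Gamma_{a,b}(L)\|x-y\|$ for all $x,y$. (Contraction/Fixed Point) There is $r\in(0,1)$ and an operator $F_{a\to b}:\mathbb{R}^d\to\mathbb{R}^d$ with a fixed point $x^*$, whose fixed points are exactly the $x$ with $f^c_{a\to b}(x)=f^u_{a\to b}(x)$, and with $\|F_{a\to b}(x)-F_{a\to b}(y)\|\le r\|x-y\|$ for all $x,y$. *)

theory Defs
  imports "HOL-Analysis.Analysis"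
begin

text \<open>Coefficients of the probability-flow ODE  dx/dt = mu t x + lambda t eps(x,t).\<close>

definition lam :: "(real \<Rightarrow> real) \<Rightarrow> real \<Rightarrow> real" where
  "lam abar t = sqrt (abar t) * deriv (\<lambda>s. sqrt ((1 - abar s) / abar s)) t"

definition mu :: "(real \<Rightarrow> real) \<Rightarrow> real \<Rightarrow> real" where
  "mu abar t = - sqrt (abar t) * deriv (\<lambda>s. 1 / sqrt (abar s)) t"

definition Gamma :: "(real \<Rightarrow> real) \<Rightarrow> real \<Rightarrow> real \<Rightarrow> real \<Rightarrow> real" where
  "Gamma abar a b L = (\<bar>lam abar a\<bar> * L + \<bar>mu abar a\<bar>) * \<bar>b - a\<bar> + 1"

definition ode_sol :: "(real \<Rightarrow> real) \<Rightarrow> ('a::euclidean_space \<Rightarrow> real \<Rightarrow> 'a)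
    \<Rightarrow> real \<Rightarrow> real \<Rightarrow> 'a \<Rightarrow> (real \<Rightarrow> 'a) \<Rightarrow> bool" where
  "ode_sol abar eps a b x X \<longleftrightarrow> X a = x \<and>
     (\<forall>t\<in>closed_segment a b.
        (X has_vector_derivative (mu abar t *\<^sub>R X t + lam abar t *\<^sub>R eps (X t) t))
          (at t within closed_segment a b))"

end

theory Submission
  imports Defs
begin

text \<open>Since \<open>F\<close> is an \<open>r\<close>-contraction fixing \<open>x*\<close>, the iterates satisfy
  \<open>\<parallel>F\<^sup>k x - x*\<parallel> \<le> r\<^sup>k \<parallel>x - x*\<parallel>\<close>. At the fixed point the two flow maps agree, so the gap
  \<open>f\<^sup>c - f\<^sup>u\<close> at \<open>F\<^sup>k x\<close> is bounded by the sum of their Lipschitz constants \<open>C \<Gamma>\<close> times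
  \<open>\<parallel>F\<^sup>k x - x*\<parallel>\<close>. The second inequality is \<open>\<parallel>x - x*\<parallel> \<le> 2B\<close>. The ODE and
  noise-schedule hypotheses enter only through these Lipschitz bounds.\<close>

lemma contraction_funpow_norm_le:
  fixes F :: "'a::real_normed_vector \<Rightarrow> 'a"
  assumes contr: "\<And>y z. norm (F y - F z) \<le> r * norm (y - z)"
    and r: "0 \<le> r"
    and fixed: "F z = z"
  shows "norm ((F ^^ k) x - z) \<le> r ^ k * norm (x - z)"
proof (induction k)
  case 0
  show ?case by simp
next
  case (Suc k)
  have "norm ((F ^^ Suc k) x - z) = norm (F ((F ^^ k) x) - F z)"
    using fixed by simp
  also have "\<dots> \<le> r * norm ((F ^^ k) x - z)"
    using contr .
  also have "\<dots> \<le> r * (r ^ k * norm (x - z))"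
    using Suc.IH r by (rule mult_left_mono)
  finally show ?case by simp
qed

lemma lipschitz_diff_norm_le_if_agree:
  fixes f g :: "'a::real_normed_vector \<Rightarrow> 'b::real_normed_vector"
  assumes lip_f: "\<And>y z. norm (f y - f z) \<le> K * norm (y - z)"
    and lip_g: "\<And>y z. norm (g y - g z) \<le> K * norm (y - z)"
    and agree: "f z = g z"
  shows "norm (f y - g y) \<le> 2 * K * norm (y - z)"
proof -
  have "norm (f y - g y) = norm ((f y - f z) - (g y - g z))"
    using agree by simp
  also have "\<dots> \<le> norm (f y - f z) + norm (g y - g z)"
    by (rule norm_triangle_ineq4)
  also have "\<dots> \<le> 2 * K * norm (y - z)"
    using lip_f[of y z] lip_g[of y z] by simp
  finally show ?thesis .
qed

lemma Gamma_ge_one: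
  assumes "L \<ge> 0"
  shows "Gamma abar a b L \<ge> 1"
  unfolding Gamma_def using assms by simp

theorem lemma1:
  fixes abar :: "real \<Rightarrow> real"
    and epsu epsc :: "'a::euclidean_space \<Rightarrow> real \<Rightarrow> 'a"
    and fu fc F :: "'a \<Rightarrow> 'a"
    and Xu Xc :: "'a \<Rightarrow> real \<Rightarrow> 'a"
    and T a b L C r B :: real and x xstar :: 'a
  assumes T: "T > 0"
    and smooth: "\<forall>n. \<forall>t\<in>{0..T}. ((deriv ^^ n) abar) differentiable (at t)"
    and abar_range: "\<forall>t\<in>{0..T}. 0 < abar t \<and> abar t < 1"
    and abar_decr: "strict_mono_on {0..T} (\<lambda>t. - abar t)"
    and ab: "a \<in> {0..T}" "b \<in> {0..T}"
    and L: "L > 0"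
    and lipu: "\<forall>t. \<forall>y z. norm (epsu y t - epsu z t) \<le> L * norm (y - z)"
    and lipc: "\<forall>t. \<forall>y z. norm (epsc y t - epsc z t) \<le> L * norm (y - z)"
    and solu: "\<forall>y. ode_sol abar epsu a b y (Xu y) \<and> fu y = Xu y b"
    and solc: "\<forall>y. ode_sol abar epsc a b y (Xc y) \<and> fc y = Xc y b"
    and C: "C > 1"
    and smooth_u: "\<forall>y z. norm (fu y - fu z) \<le> C * Gamma abar a b L * norm (y - z)"
    and smooth_c: "\<forall>y z. norm (fc y - fc z) \<le> C * Gamma abar a b L * norm (y - z)"
    and r: "0 < r" "r < 1"
    and fixpt: "F xstar = xstar"
    and fixes_char: "\<forall>y. F y = y \<longleftrightarrow> fc y = fu y"
    and contr: "\<forall>y z. norm (F y - F z) \<le> r * norm (y - z)"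
    and B: "B > 0"
    and xB: "norm x \<le> B" and xsB: "norm xstar \<le> B"
  shows "\<forall>k::nat.
     norm (fc ((F ^^ k) x) - fu ((F ^^ k) x))
        \<le> 2 * C * Gamma abar a b L * r ^ k * norm (x - xstar)
   \<and> 2 * C * Gamma abar a b L * r ^ k * norm (x - xstar)
        \<le> 4 * C * Gamma abar a b L * r ^ k * B"
proof
  fix k :: nat
  define K where "K = C * Gamma abar a b L"
  have K: "K \<ge> 0"
    unfolding K_def using C Gamma_ge_one[of L abar a b] L by simp
  have agree: "fc xstar = fu xstar"
    using fixes_char fixpt by blast
  have "norm (fc ((F ^^ k) x) - fu ((F ^^ k) x)) \<le> 2 * K * norm ((F ^^ k) x - xstar)"
    using smooth_c smooth_u agree unfolding K_def by (blast intro: lipschitz_diff_norm_le_if_agree)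
  also have "\<dots> \<le> 2 * K * (r ^ k * norm (x - xstar))"
    using contraction_funpow_norm_le[of F r xstar] contr r fixpt K by (simp add: mult_left_mono)
  finally have gap: "norm (fc ((F ^^ k) x) - fu ((F ^^ k) x)) \<le> 2 * K * r ^ k * norm (x - xstar)"
    by (simp add: mult.assoc)
  have "norm (x - xstar) \<le> 2 * B"
    using norm_triangle_ineq4[of x xstar] xB xsB by simp
  then have "2 * K * r ^ k * norm (x - xstar) \<le> 2 * K * r ^ k * (2 * B)"
    using K r by (intro mult_left_mono) auto
  with gap show "norm (fc ((F ^^ k) x) - fu ((F ^^ k) x))
        \<le> 2 * C * Gamma abar a b L * r ^ k * norm (x - xstar)
   \<and> 2 * C * Gamma abar a b L * r ^ k * norm (x - xstar)
        \<le> 4 * C * Gamma abar a b L * r ^ k * B"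
    unfolding K_def by (simp add: algebra_simps)
qed

end
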